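(* Let $\mathcal{P}_n$ be a geometric lattice of rank two with $n$ atoms (the lattice of flats of the uniform matroid $U_{2,n}$). Then $\mathcal{M}(\mathcal{P}_n,t)=(t^2-nt+1)(t+1)^2(t-1)^2$.
   Context: $\mathcal{P}_n$ consists of $\hat 0$ (rank 0), $n$ atoms (rank 1) and $\hat 1$ (rank 2). For a finite ranked poset $\mathcal{P}$, $\mathrm{rk}(\mathcal{P})$ is the maximum rank and $\rho(x,y,z)=3\,\mathrm{rk}(\mathcal{P})-\mathrm{rk}(x)-\mathrm{rk}(y)-\mathrm{rk}(z)$. Let $\delta_3(x,y,z)=1$ if $x=y=z$ and $0$ otherwise, and $J$ the unique integer-valued function on triples $x\le y\le z$ with $\sum_{x\le a\le y\le b\le z}J(a,y,b)=\delta_3(x,y,z)$ for all $x\le y\le z$. Then $\mathcal{M}(\mathcal{P},t)=\sum_{x\le y\le z}J(x,y,z)\,t^{\rho(x,y,z)}$. *)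

theory Defs
  imports "HOL-Computational_Algebra.Polynomial"
begin

definition chains3 :: "'a set \<Rightarrow> ('a \<Rightarrow> 'a \<Rightarrow> bool) \<Rightarrow> ('a \<times> 'a \<times> 'a) set" where
  "chains3 S le = {(x,y,z). x \<in> S \<and> y \<in> S \<and> z \<in> S \<and> le x y \<and> le y z}"

definition delta3 :: "'a \<Rightarrow> 'a \<Rightarrow> 'a \<Rightarrow> int" where
  "delta3 x y z = (if x = y \<and> y = z then 1 else 0)"

text \<open>f satisfies the defining recursion of J on all triples x \<le> y \<le> z
  (and is normalised to 0 off such triples, where J is not defined).\<close>
definition is_J :: "'a set \<Rightarrow> ('a \<Rightarrow> 'a \<Rightarrow> bool) \<Rightarrow> ('a \<Rightarrow> 'a \<Rightarrow> 'a \<Rightarrow> int) \<Rightarrow> bool" where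
  "is_J S le f \<longleftrightarrow>
     (\<forall>x y z. (x,y,z) \<notin> chains3 S le \<longrightarrow> f x y z = 0) \<and>
     (\<forall>x y z. (x,y,z) \<in> chains3 S le \<longrightarrow>
        (\<Sum>(a,b)\<in>{(a,b). a \<in> S \<and> b \<in> S \<and> le x a \<and> le a y \<and> le y b \<and> le b z}. f a y b)
          = delta3 x y z)"

definition J_fun :: "'a set \<Rightarrow> ('a \<Rightarrow> 'a \<Rightarrow> bool) \<Rightarrow> 'a \<Rightarrow> 'a \<Rightarrow> 'a \<Rightarrow> int" where
  "J_fun S le = (THE f. is_J S le f)"

definition max_rank :: "'a set \<Rightarrow> ('a \<Rightarrow> nat) \<Rightarrow> nat" where
  "max_rank S rk = Max (rk ` S)"

definition M_poly :: "'a set \<Rightarrow> ('a \<Rightarrow> 'a \<Rightarrow> bool) \<Rightarrow> ('a \<Rightarrow> nat) \<Rightarrow> int poly" where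
  "M_poly S le rk =
     (\<Sum>(x,y,z)\<in>chains3 S le.
        monom (J_fun S le x y z) (3 * max_rank S rk - rk x - rk y - rk z))"

datatype pn_elem = Bot | Atom nat | Top

definition Pn :: "nat \<Rightarrow> pn_elem set" where
  "Pn n = {Bot, Top} \<union> Atom ` {1..n}"

fun pn_le :: "pn_elem \<Rightarrow> pn_elem \<Rightarrow> bool" where
  "pn_le Bot _ = True"
| "pn_le _ Top = True"
| "pn_le (Atom i) (Atom j) = (i = j)"
| "pn_le _ _ = False"

fun pn_rk :: "pn_elem \<Rightarrow> nat" where
  "pn_rk Bot = 0"
| "pn_rk (Atom _) = 1"
| "pn_rk Top = 2"

end

theory Submission
  imports Defs
begin

text \<open>The defining recursion of J is solved by J(x,y,z) = \<mu>(x,y) \<mu>(y,z), \<mu> the Moebius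
  function: the sum over pairs (a,b) with x \<le> a \<le> y \<le> b \<le> z splits into the product of
  the sums of \<mu>(a,y) over a \<in> [x,y] and of \<mu>(y,b) over b \<in> [y,z], i.e. of two Kronecker
  deltas. In P_n the Moebius function is -1 on covering pairs and \<mu>(0,1) = n - 1, so summing
  \<mu>(x,y) \<mu>(y,z) t^(6 - rk x - rk y - rk z) over the chains gives
  t^6 - n t^5 - t^4 + 2n t^3 - t^2 - n t + 1, which is the claimed product.\<close>

lemma is_J_unique:
  assumes fin: "finite S"
    and reflexive: "\<And>x. x \<in> S \<Longrightarrow> le x x"
    and antisymmetric: "\<And>x y. x \<in> S \<Longrightarrow> y \<in> S \<Longrightarrow> le x y \<Longrightarrow> le y x \<Longrightarrow> x = y"
    and transitive: "\<And>x y z. x \<in> S \<Longrightarrow> y \<in> S \<Longrightarrow> z \<in> S \<Longrightarrow> le x y \<Longrightarrow> le y z \<Longrightarrow> le x z"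
    and f: "is_J S le f" and g: "is_J S le g"
  shows "f = g"
proof -
  define I where "I x y z = {(a,b). a \<in> S \<and> b \<in> S \<and> le x a \<and> le a y \<and> le y b \<and> le b z}"
    for x y z
  have fin_I: "finite (I x y z)" for x y z
    by (rule finite_subset[of _ "S \<times> S"]) (auto simp: I_def fin)
  have on_chains: "f x y z = g x y z" if "(x,y,z) \<in> chains3 S le" for x y z
    using that
  proof (induction "card (I x y z)" arbitrary: x z rule: less_induct)
    case less
    have xyz: "x \<in> S" "y \<in> S" "z \<in> S" "le x y" "le y z"
      using less.prems by (auto simp: chains3_def)
    have top_pair: "(x,z) \<in> I x y z"
      using xyz reflexive by (auto simp: I_def)
    have lower_pairs: "f a y b = g a y b" if ab: "(a,b) \<in> I x y z - {(x,z)}" for a b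
    proof -
      have sub: "I a y b \<subseteq> I x y z"
        using ab xyz transitive unfolding I_def by blast
      have "(x,z) \<notin> I a y b"
        using ab xyz antisymmetric by (auto simp: I_def)
      then have "card (I a y b) < card (I x y z)"
        using sub top_pair fin_I by (metis psubset_card_mono psubset_eq)
      moreover have "(a,y,b) \<in> chains3 S le"
        using ab xyz by (auto simp: I_def chains3_def)
      ultimately show ?thesis
        using less.hyps by blast
    qed
    have "f x y z + (\<Sum>(a,b)\<in>I x y z - {(x,z)}. f a y b) = (\<Sum>(a,b)\<in>I x y z. f a y b)"
      using top_pair fin_I by (simp add: sum.remove)
    also have "\<dots> = delta3 x y z"
      using f less.prems unfolding is_J_def I_def by blast
    also have "\<dots> = (\<Sum>(a,b)\<in>I x y z. g a y b)"
      using g less.prems unfolding is_J_def I_def by simp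
    also have "\<dots> = g x y z + (\<Sum>(a,b)\<in>I x y z - {(x,z)}. g a y b)"
      using top_pair fin_I by (simp add: sum.remove)
    also have "(\<Sum>(a,b)\<in>I x y z - {(x,z)}. g a y b) = (\<Sum>(a,b)\<in>I x y z - {(x,z)}. f a y b)"
    proof (rule sum.cong[OF refl])
      fix p
      assume "p \<in> I x y z - {(x,z)}"
      then show "(case p of (a,b) \<Rightarrow> g a y b) = (case p of (a,b) \<Rightarrow> f a y b)"
        by (cases p) (simp add: lower_pairs)
    qed
    finally show ?case
      by simp
  qed
  show ?thesis
  proof (intro ext)
    fix x y z
    show "f x y z = g x y z"
      using on_chains f g unfolding is_J_def by (cases "(x,y,z) \<in> chains3 S le") auto
  qed
qed

text \<open>Both one-sided inversion identities are stated, although in a finite poset either one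
  determines the Moebius function.\<close>

definition is_mobius :: "'a set \<Rightarrow> ('a \<Rightarrow> 'a \<Rightarrow> bool) \<Rightarrow> ('a \<Rightarrow> 'a \<Rightarrow> int) \<Rightarrow> bool" where
  "is_mobius S le m \<longleftrightarrow> (\<forall>x\<in>S. \<forall>y\<in>S. le x y \<longrightarrow>
      (\<Sum>a\<in>{a \<in> S. le x a \<and> le a y}. m a y) = (if x = y then 1 else 0) \<and>
      (\<Sum>a\<in>{a \<in> S. le x a \<and> le a y}. m x a) = (if x = y then 1 else 0))"

lemma is_J_mobius_product:
  assumes "is_mobius S le m"
  shows "is_J S le (\<lambda>x y z. if (x,y,z) \<in> chains3 S le then m x y * m y z else 0)"
  unfolding is_J_def
proof (intro conjI allI impI)
  fix x y z
  assume xyz: "(x,y,z) \<in> chains3 S le"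
  define A where "A = {a \<in> S. le x a \<and> le a y}"
  define B where "B = {b \<in> S. le y b \<and> le b z}"
  have "{(a,b). a \<in> S \<and> b \<in> S \<and> le x a \<and> le a y \<and> le y b \<and> le b z} = A \<times> B"
    by (auto simp: A_def B_def)
  moreover have "(\<Sum>(a,b)\<in>A \<times> B. if (a,y,b) \<in> chains3 S le then m a y * m y b else 0)
      = (\<Sum>(a,b)\<in>A \<times> B. m a y * m y b)"
    using xyz by (intro sum.cong) (auto simp: A_def B_def chains3_def)
  moreover have "\<dots> = (\<Sum>a\<in>A. m a y) * (\<Sum>b\<in>B. m y b)"
    by (simp add: sum_product sum.cartesian_product)
  moreover have "\<dots> = delta3 x y z"
    using assms xyz unfolding A_def B_def is_mobius_def chains3_def delta3_def by simp
  ultimately show "(\<Sum>(a,b)\<in>{(a,b). a \<in> S \<and> b \<in> S \<and> le x a \<and> le a y \<and> le y b \<and> le b z}.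
      if (a,y,b) \<in> chains3 S le then m a y * m y b else 0) = delta3 x y z"
    by simp
qed simp

lemma J_fun_eq_mobius_product:
  assumes "finite S"
    and "\<And>x. x \<in> S \<Longrightarrow> le x x"
    and "\<And>x y. x \<in> S \<Longrightarrow> y \<in> S \<Longrightarrow> le x y \<Longrightarrow> le y x \<Longrightarrow> x = y"
    and "\<And>x y z. x \<in> S \<Longrightarrow> y \<in> S \<Longrightarrow> z \<in> S \<Longrightarrow> le x y \<Longrightarrow> le y z \<Longrightarrow> le x z"
    and "is_mobius S le m"
  shows "J_fun S le = (\<lambda>x y z. if (x,y,z) \<in> chains3 S le then m x y * m y z else 0)"
  unfolding J_fun_def
proof (rule the_equality)
  show J: "is_J S le (\<lambda>x y z. if (x,y,z) \<in> chains3 S le then m x y * m y z else 0)"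
    using assms(5) by (rule is_J_mobius_product)
  show "f = (\<lambda>x y z. if (x,y,z) \<in> chains3 S le then m x y * m y z else 0)"
    if "is_J S le f" for f
    using is_J_unique[OF assms(1-4) that J] .
qed

lemma sum_chains3:
  assumes "finite S"
  shows "(\<Sum>(x,y,z)\<in>chains3 S le. F x y z) =
    (\<Sum>x\<in>S. \<Sum>y\<in>S. \<Sum>z\<in>S. if le x y \<and> le y z then F x y z else 0)"
proof -
  have "(\<Sum>(x,y,z)\<in>chains3 S le. F x y z) =
      (\<Sum>(x,y,z)\<in>S \<times> S \<times> S. if le x y \<and> le y z then F x y z else 0)"
    by (rule sum.mono_neutral_cong_left) (auto simp: chains3_def assms split: if_splits)
  also have "\<dots> = (\<Sum>x\<in>S. \<Sum>y\<in>S. \<Sum>z\<in>S. if le x y \<and> le y z then F x y z else 0)"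
    by (simp add: sum.cartesian_product)
  finally show ?thesis .
qed

lemma finite_Pn [simp]: "finite (Pn n)"
  by (simp add: Pn_def)

lemma Bot_in_Pn [simp]: "Bot \<in> Pn n"
  and Top_in_Pn [simp]: "Top \<in> Pn n"
  and Atom_in_Pn [simp]: "Atom i \<in> Pn n \<longleftrightarrow> 1 \<le> i \<and> i \<le> n"
  by (auto simp: Pn_def)

lemma sum_Pn: "(\<Sum>x\<in>Pn n. h x) = h Bot + h Top + (\<Sum>i=1..n. h (Atom i))"
proof -
  have "Pn n = insert Bot (insert Top (Atom ` {1..n}))"
    by (auto simp: Pn_def)
  moreover have "sum h (Atom ` {1..n}) = (\<Sum>i=1..n. h (Atom i))"
    by (subst sum.reindex) (auto simp: inj_on_def)
  ultimately show ?thesis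
    by (simp add: image_iff add.assoc)
qed

lemma pn_le_refl: "pn_le x x"
  by (cases x) auto

lemma pn_le_antisym: "pn_le x y \<Longrightarrow> pn_le y x \<Longrightarrow> x = y"
  by (cases x; cases y) auto

lemma pn_le_trans: "pn_le x y \<Longrightarrow> pn_le y z \<Longrightarrow> pn_le x z"
  by (cases x; cases y; cases z) auto

lemma max_rank_Pn: "max_rank (Pn n) pn_rk = 2"
  unfolding max_rank_def
proof (rule Max_eqI)
  have "pn_rk x \<le> 2" for x
    by (cases x) auto
  then show "y \<le> 2" if "y \<in> pn_rk ` Pn n" for y
    using that by auto
  show "2 \<in> pn_rk ` Pn n"
    using Top_in_Pn by (metis image_eqI pn_rk.simps(3))
qed simp

fun pn_mobius :: "nat \<Rightarrow> pn_elem \<Rightarrow> pn_elem \<Rightarrow> int" where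
  "pn_mobius n Bot Bot = 1"
| "pn_mobius n Bot (Atom _) = -1"
| "pn_mobius n Bot Top = int n - 1"
| "pn_mobius n (Atom i) (Atom j) = (if i = j then 1 else 0)"
| "pn_mobius n (Atom _) Top = -1"
| "pn_mobius n Top Top = 1"
| "pn_mobius n _ _ = 0"

lemma eq_sym_conj: "(a = b \<and> b = a) \<longleftrightarrow> a = b"
  by auto

lemma is_mobius_pn_mobius: "is_mobius (Pn n) pn_le (pn_mobius n)"
proof -
  have "(\<Sum>a\<in>Pn n. if pn_le x a \<and> pn_le a y then pn_mobius n a y else 0) = (if x = y then 1 else 0)"
    and "(\<Sum>a\<in>Pn n. if pn_le x a \<and> pn_le a y then pn_mobius n x a else 0) = (if x = y then 1 else 0)"
    if "x \<in> Pn n" "y \<in> Pn n" "pn_le x y" for x y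
    using that unfolding sum_Pn by (cases x; cases y; auto simp: sum.delta eq_sym_conj)+
  then show ?thesis
    unfolding is_mobius_def sum.inter_filter[OF finite_Pn] by blast
qed

lemma J_fun_Pn:
  "J_fun (Pn n) pn_le =
    (\<lambda>x y z. if (x,y,z) \<in> chains3 (Pn n) pn_le then pn_mobius n x y * pn_mobius n y z else 0)"
  by (rule J_fun_eq_mobius_product)
    (auto intro: pn_le_refl pn_le_antisym pn_le_trans is_mobius_pn_mobius)

lemma sum_if_const_condition:
  "(\<Sum>k\<in>A. if P then g k else 0) = (if P then sum g A else (0::'b::comm_monoid_add))"
  by simp

lemma poly_M_poly_Pn:
  "poly (M_poly (Pn n) pn_le pn_rk) t =
    t^6 - of_nat n * t^5 - t^4 + 2 * of_nat n * t^3 - t^2 - of_nat n * t + 1"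
proof -
  have "poly (M_poly (Pn n) pn_le pn_rk) t =
      (\<Sum>x\<in>Pn n. \<Sum>y\<in>Pn n. \<Sum>z\<in>Pn n. if pn_le x y \<and> pn_le y z then
        pn_mobius n x y * pn_mobius n y z * t ^ (6 - pn_rk x - pn_rk y - pn_rk z) else 0)"
    unfolding M_poly_def J_fun_Pn max_rank_Pn poly_sum sum_chains3[OF finite_Pn]
    by (intro sum.cong refl) (simp add: chains3_def poly_monom)
  also have "\<dots> = t^6 - of_nat n * t^5 - t^4 + 2 * of_nat n * t^3 - t^2 - of_nat n * t + 1"
    by (simp add: sum_Pn if_if_eq_conj[symmetric] sum_if_const_condition sum.delta sum.delta' algebra_simps)
  finally show ?thesis .
qed

theorem proposition6p9:
  fixes n :: nat
  assumes "n \<ge> 2"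
  shows "M_poly (Pn n) pn_le pn_rk
           = [:1, - of_nat n, 1:] * [:1, 1:] ^ 2 * [:-1, 1:] ^ 2"
proof -
  have "poly (M_poly (Pn n) pn_le pn_rk) t
      = poly ([:1, - of_nat n, 1:] * [:1, 1:] ^ 2 * [:-1, 1:] ^ 2) t" for t
    unfolding poly_M_poly_Pn by (simp add: algebra_simps power2_eq_square eval_nat_numeral)
  then show ?thesis
    using poly_eq_poly_eq_iff by blast
qed

end
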